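(* The class of data languages accepted by deterministic SAFA (DSAFA) is closed under complementation (with respect to $(\Sigma\times D)^*$), but is not closed under union, intersection, concatenation, Kleene closure, reversal, homomorphism, or inverse homomorphism.
   Context: $D$ is a fixed countably infinite set of data values; for a finite alphabet $\Sigma$, data words are elements of $(\Sigma\times D)^*$. A set augmented finite automaton (SAFA) is a tuple $M=(Q,\Sigma\times D,q_0,F,H,\delta)$: $Q$ finite set of states, $q_0\in Q$ initial, $F\subseteq Q$ final, $H=\{h_1,\dots,h_m\}$ a finite collection of (names of) sets of data values, $\delta\subseteq Q\times\Sigma\times C\times OP\times Q$ with $C=\{p(h_i),\,!p(h_i): h_i\in H\}$, $OP=\{-\}\cup\{\mathsf{ins}(h_i):h_i\in H\}$. Configurations are $(q,\langle S_1,\dots,S_m\rangle)$ with $S_i\subseteq D$ finite; initially state $q_0$ and all sets empty. On reading $(a,d)$, a transition $(q,a,\alpha,op,q')$ from the current state may be taken if $\alpha=p(h_i)$ and $d\in S_i$, or $\alpha=\,!p(h_i)$ and $d\notin S_i$; then the state becomes $q'$ and if $op=\mathsf{ins}(h_j)$ the value $d$ is added to $S_j$ ($op=-$ changes nothing). A word is accepted if some run reads it entirely and ends in $F$. A SAFA is deterministic (a DSAFA) if for every $q\in Q$ and $a\in\Sigma$, all transitions from $q$ on letter $a$ test the same set $h_i$, and there is at most one such transition with condition $p(h_i)$ and at most one with condition $!p(h_i)$. Concatenation is $L_1L_2=\{uv:u\in L_1,v\in L_2\}$, Kleene closure is $L^*=\{u_1\cdots u_n:n\ge 0,u_i\in L\}$,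 reversal reverses the order of letters, and a homomorphism is a monoid homomorphism $(\Sigma\times D)^*\to(\Sigma\times D)^*$ determined by images of single letters; "not closed" means there exist DSAFA-recognizable languages (and, where relevant, a homomorphism) whose result is not recognized by any DSAFA. *)

theory Defs
  imports Main "HOL-Library.Countable"
begin

text \<open>States are natural numbers; the sets h_1..h_m are indexed by 0..m-1.\<close>

datatype cond = P nat | NP nat
datatype setop = NoOp | Ins nat

record safa =
  states :: "nat set"
  init   :: nat
  finals :: "nat set"
  nsets  :: nat
  trans  :: "(nat \<times> nat \<times> cond \<times> setop \<times> nat) set"

fun cond_idx :: "cond \<Rightarrow> nat" where
  "cond_idx (P i) = i" | "cond_idx (NP i) = i"

fun op_ok :: "nat \<Rightarrow> setop \<Rightarrow> bool" where
  "op_ok m NoOp = True" | "op_ok m (Ins j) = (j < m)"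

definition safa_wf :: "nat set \<Rightarrow> safa \<Rightarrow> bool" where
  "safa_wf \<Sigma> M \<longleftrightarrow> finite (states M) \<and> init M \<in> states M \<and> finals M \<subseteq> states M
     \<and> (\<forall>(q, a, c, op, q') \<in> trans M. q \<in> states M \<and> a \<in> \<Sigma> \<and> cond_idx c < nsets M
            \<and> op_ok (nsets M) op \<and> q' \<in> states M)"

definition safa_det :: "safa \<Rightarrow> bool" where
  "safa_det M \<longleftrightarrow> (\<forall>q a c1 o1 q1 c2 o2 q2.
      (q, a, c1, o1, q1) \<in> trans M \<and> (q, a, c2, o2, q2) \<in> trans M \<longrightarrow>
        cond_idx c1 = cond_idx c2 \<and> (c1 = c2 \<longrightarrow> o1 = o2 \<and> q1 = q2))"

type_synonym 'd config = "nat \<times> (nat \<Rightarrow> 'd set)"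

fun cond_sat :: "cond \<Rightarrow> (nat \<Rightarrow> 'd set) \<Rightarrow> 'd \<Rightarrow> bool" where
  "cond_sat (P i) S d = (d \<in> S i)"
| "cond_sat (NP i) S d = (d \<notin> S i)"

fun apply_op :: "setop \<Rightarrow> (nat \<Rightarrow> 'd set) \<Rightarrow> 'd \<Rightarrow> (nat \<Rightarrow> 'd set)" where
  "apply_op NoOp S d = S"
| "apply_op (Ins j) S d = S(j := insert d (S j))"

definition step :: "safa \<Rightarrow> 'd config \<Rightarrow> nat \<times> 'd \<Rightarrow> 'd config \<Rightarrow> bool" where
  "step M c x c' \<longleftrightarrow> (\<exists>cd op. (fst c, fst x, cd, op, fst c') \<in> trans M
       \<and> cond_sat cd (snd c) (snd x) \<and> snd c' = apply_op op (snd c) (snd x))"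

fun runs :: "safa \<Rightarrow> 'd config \<Rightarrow> (nat \<times> 'd) list \<Rightarrow> 'd config set" where
  "runs M c [] = {c}"
| "runs M c (x # w) = \<Union> {runs M c' w | c'. step M c x c'}"

definition words :: "nat set \<Rightarrow> (nat \<times> 'd) list set" where
  "words \<Sigma> = {w. set w \<subseteq> \<Sigma> \<times> UNIV}"

definition lang :: "nat set \<Rightarrow> safa \<Rightarrow> (nat \<times> 'd) list set" where
  "lang \<Sigma> M = {w \<in> words \<Sigma>. \<exists>c \<in> runs M (init M, \<lambda>_. {}) w. fst c \<in> finals M}"

definition dsafa_lang :: "nat set \<Rightarrow> (nat \<times> 'd) list set \<Rightarrow> bool" where
  "dsafa_lang \<Sigma> L \<longleftrightarrow> (\<exists>M. safa_wf \<Sigma> M \<and> safa_det M \<and> lang \<Sigma> M = L)"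

definition conc :: "'x list set \<Rightarrow> 'x list set \<Rightarrow> 'x list set" where
  "conc L1 L2 = {u @ v | u v. u \<in> L1 \<and> v \<in> L2}"

definition kstar :: "'x list set \<Rightarrow> 'x list set" where
  "kstar L = {concat us | us. set us \<subseteq> L}"

definition hom_ext :: "('x \<Rightarrow> 'x list) \<Rightarrow> 'x list \<Rightarrow> 'x list" where
  "hom_ext h w = concat (map h w)"

definition is_hom :: "nat set \<Rightarrow> (nat \<times> 'd \<Rightarrow> (nat \<times> 'd) list) \<Rightarrow> bool" where
  "is_hom \<Sigma> h \<longleftrightarrow> (\<forall>a \<in> \<Sigma>. \<forall>d. h (a, d) \<in> words \<Sigma>)"

end

theory Submission
  imports Defs
begin

(* Complementation: a deterministic SAFA is completed by sending every missing transition to a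
   fresh sink state. The new transitions test the set already tested on the same state and letter,
   so the completion stays deterministic; it has exactly one run on every word, and swapping final
   and non-final states complements the language.

   Non-closure rests on a fooling argument. Let x and f not occur in u, and let z and f differ from x.
   A deterministic run on u (a, x) has inserted the fresh value x into at most one set. If (a', x)
   and (a', y) are accepted next but a fresh (a', f) is not, the transition on a' tests p(h_j) with
   x and y in h_j. If after a further letter (b, z) the continuation (a'', x) is accepted but
   (a'', y) and (a'', f) are not, it tests p(h_k) with x in h_k and y not in h_k. Sets only grow,
   so j and k differ, and as z differs from x, x was already in h_k: it entered two sets in one
   step. The union of repeat3 and repeat4 (the last of three or four values repeats one of the two
   before it) exhibits this pattern; it is also a concatenation and a reversal of DSAFA languages,
   and by De Morgan it refutes closure under intersection. *)

definition accepts :: "safa \<Rightarrow> 'd config \<Rightarrow> (nat \<times> 'd) list \<Rightarrow> bool" where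
  "accepts M c w \<longleftrightarrow> (\<exists>c'\<in>runs M c w. fst c' \<in> finals M)"

lemma runs_Cons_iff: "c'' \<in> runs M c (x # w) \<longleftrightarrow> (\<exists>c'. step M c x c' \<and> c'' \<in> runs M c' w)"
  by auto

declare runs.simps(2)[simp del] runs_Cons_iff[simp]

lemma runs_append_iff: "c'' \<in> runs M c (u @ v) \<longleftrightarrow> (\<exists>c'\<in>runs M c u. c'' \<in> runs M c' v)"
proof (induction u arbitrary: c)
  case (Cons x u)
  show ?case
    unfolding append_Cons runs_Cons_iff Cons.IH Bex_def by blast
qed simp

lemma step_Pair_iff: "step M (q, S) (a, d) c' \<longleftrightarrow>
   (\<exists>cd op q'. (q, a, cd, op, q') \<in> trans M \<and> cond_sat cd S d \<and> c' = (q', apply_op op S d))"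
  unfolding step_def by (cases c') auto

lemma accepts_Nil [simp]: "accepts M c [] \<longleftrightarrow> fst c \<in> finals M"
  by (simp add: accepts_def)

lemma accepts_Cons [simp]: "accepts M (q, S) ((a, d) # w) \<longleftrightarrow>
   (\<exists>cd op q'. (q, a, cd, op, q') \<in> trans M \<and> cond_sat cd S d \<and> accepts M (q', apply_op op S d) w)"
proof -
  have "accepts M (q, S) ((a, d) # w) \<longleftrightarrow> (\<exists>c'. step M (q, S) (a, d) c' \<and> accepts M c' w)"
    unfolding accepts_def runs_Cons_iff Bex_def by blast
  then show ?thesis
    unfolding step_Pair_iff by blast
qed

lemma accepts_append_iff: "accepts M c (u @ v) \<longleftrightarrow> (\<exists>c'\<in>runs M c u. accepts M c' v)"
  unfolding accepts_def runs_append_iff Bex_def by blast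

lemma lang_eq: "lang \<Sigma> M = {w \<in> words \<Sigma>. accepts M (init M, \<lambda>_. {}) w}"
  by (simp add: lang_def accepts_def)

lemma safa_detD:
  "safa_det M \<Longrightarrow> (q, a, c1, o1, q1) \<in> trans M \<Longrightarrow> (q, a, c2, o2, q2) \<in> trans M
    \<Longrightarrow> cond_idx c1 = cond_idx c2 \<and> (c1 = c2 \<longrightarrow> o1 = o2 \<and> q1 = q2)"
  unfolding safa_det_def by blast

lemma cond_sat_same_idx: "cond_idx c1 = cond_idx c2 \<Longrightarrow> cond_sat c1 S d \<Longrightarrow> cond_sat c2 S d \<Longrightarrow> c1 = c2"
  by (cases c1; cases c2) auto

lemma step_det: "safa_det M \<Longrightarrow> step M c x c1 \<Longrightarrow> step M c x c2 \<Longrightarrow> c1 = c2"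
  unfolding step_def by (metis safa_detD cond_sat_same_idx prod.expand)

lemma runs_det: "safa_det M \<Longrightarrow> c1 \<in> runs M c w \<Longrightarrow> c2 \<in> runs M c w \<Longrightarrow> c1 = c2"
  by (induction w arbitrary: c) (auto dest: step_det)

lemma accepts_append_det:
  "safa_det M \<Longrightarrow> c' \<in> runs M c u \<Longrightarrow> accepts M c (u @ v) \<longleftrightarrow> accepts M c' v"
  unfolding accepts_append_iff by (auto dest: runs_det)

lemma accepts_Cons_det:
  "safa_det M \<Longrightarrow> step M c x c' \<Longrightarrow> accepts M c (x # w) \<longleftrightarrow> accepts M c' w"
proof -
  assume det: "safa_det M" and "step M c x c'"
  then have "c' \<in> runs M c [x]"
    by (cases c') auto
  from accepts_append_det[OF det this, of w] show ?thesis
    by simp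
qed

lemma accepts_det_iff: "safa_det M \<Longrightarrow> c' \<in> runs M c w \<Longrightarrow> accepts M c w \<longleftrightarrow> fst c' \<in> finals M"
  using accepts_append_det[of M c' c w "[]"] by simp

subsection \<open>Complementation\<close>

lemma runs_mono_trans: "trans M \<subseteq> trans M' \<Longrightarrow> runs M c w \<subseteq> runs M' c w"
  by (induction w arbitrary: c) (auto simp: step_def, blast)

lemma safa_wf_transD:
  "safa_wf \<Sigma> M \<Longrightarrow> (q, a, c, op, q') \<in> trans M \<Longrightarrow>
    q \<in> states M \<and> a \<in> \<Sigma> \<and> cond_idx c < nsets M \<and> op_ok (nsets M) op \<and> q' \<in> states M"
  unfolding safa_wf_def by fast

lemma step_fst_states:
  "safa_wf \<Sigma> M \<Longrightarrow> step M c x c' \<Longrightarrow> fst c \<in> states M \<and> fst c' \<in> states M"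
  unfolding step_def by (auto dest: safa_wf_transD)

lemma runs_fst_states:
  "safa_wf \<Sigma> M \<Longrightarrow> fst c \<in> states M \<Longrightarrow> c' \<in> runs M c w \<Longrightarrow> fst c' \<in> states M"
  by (induction w arbitrary: c) (auto dest: step_fst_states)

definition sink :: "safa \<Rightarrow> nat" where
  "sink M = Suc (Max (states M))"

(* The set tested by the transitions of q on a, unique when M is deterministic. The default 0 for
   a state without such transitions is why compl_safa keeps at least one set. *)
definition tested_set :: "safa \<Rightarrow> nat \<Rightarrow> nat \<Rightarrow> nat" where
  "tested_set M q a = (if \<exists>c op q'. (q, a, c, op, q') \<in> trans M
     then cond_idx (SOME c. \<exists>op q'. (q, a, c, op, q') \<in> trans M) else 0)"

definition compl_safa :: "nat set \<Rightarrow> safa \<Rightarrow> safa" where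
  "compl_safa \<Sigma> M = \<lparr>states = insert (sink M) (states M), init = init M,
     finals = insert (sink M) (states M) - finals M, nsets = max 1 (nsets M),
     trans = trans M \<union> {(q, a, c, NoOp, sink M) | q a c. q \<in> insert (sink M) (states M) \<and> a \<in> \<Sigma>
        \<and> cond_idx c = tested_set M q a \<and> \<not> (\<exists>op q'. (q, a, c, op, q') \<in> trans M)}\<rparr>"

lemma sink_notin_states:
  assumes "safa_wf \<Sigma> M"
  shows "sink M \<notin> states M"
proof
  have "finite (states M)"
    using assms by (simp add: safa_wf_def)
  moreover assume "sink M \<in> states M"
  ultimately have "Suc (Max (states M)) \<le> Max (states M)"
    unfolding sink_def by (rule Max_ge)
  then show False
    by simp
qed

lemma tested_set_witness:
  assumes "(q, a, c, op, q') \<in> trans M"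
  obtains c0 op0 q0 where "(q, a, c0, op0, q0) \<in> trans M" "tested_set M q a = cond_idx c0"
proof -
  let ?c0 = "SOME c. \<exists>op q'. (q, a, c, op, q') \<in> trans M"
  have ex: "\<exists>c op q'. (q, a, c, op, q') \<in> trans M"
    using assms by blast
  then have "\<exists>op q'. (q, a, ?c0, op, q') \<in> trans M"
    by (rule someI_ex)
  moreover have "tested_set M q a = cond_idx ?c0"
    using ex unfolding tested_set_def by (simp only: if_True)
  ultimately show thesis
    using that by blast
qed

lemma tested_set_eq: "safa_det M \<Longrightarrow> (q, a, c, op, q') \<in> trans M \<Longrightarrow> tested_set M q a = cond_idx c"
  by (metis tested_set_witness safa_detD)

lemma tested_set_less: "safa_wf \<Sigma> M \<Longrightarrow> tested_set M q a < max 1 (nsets M)"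
proof (cases "\<exists>c op q'. (q, a, c, op, q') \<in> trans M")
  case True
  assume "safa_wf \<Sigma> M"
  with True show ?thesis
    by (metis tested_set_witness safa_wf_transD less_max_iff_disj)
qed (simp add: tested_set_def)

lemma op_ok_mono: "op_ok m op \<Longrightarrow> m \<le> n \<Longrightarrow> op_ok n op"
  by (cases op) auto

lemma compl_safa_wf:
  assumes wf: "safa_wf \<Sigma> M"
  shows "safa_wf \<Sigma> (compl_safa \<Sigma> M)"
proof -
  have trans_ok: "q \<in> states (compl_safa \<Sigma> M) \<and> a \<in> \<Sigma> \<and> cond_idx c < nsets (compl_safa \<Sigma> M)
      \<and> op_ok (nsets (compl_safa \<Sigma> M)) op \<and> q' \<in> states (compl_safa \<Sigma> M)"
    if "(q, a, c, op, q') \<in> trans (compl_safa \<Sigma> M)" for q a c op q'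
    using that safa_wf_transD[OF wf] tested_set_less[OF wf, of q a] op_ok_mono[of "nsets M" op]
    unfolding compl_safa_def by (auto simp: less_max_iff_disj)
  moreover have "finite (states (compl_safa \<Sigma> M))" "init (compl_safa \<Sigma> M) \<in> states (compl_safa \<Sigma> M)"
    "finals (compl_safa \<Sigma> M) \<subseteq> states (compl_safa \<Sigma> M)"
    using wf unfolding safa_wf_def compl_safa_def by auto
  ultimately show ?thesis
    unfolding safa_wf_def[of \<Sigma> "compl_safa \<Sigma> M"] by blast
qed

lemma compl_safa_det:
  assumes det: "safa_det M"
  shows "safa_det (compl_safa \<Sigma> M)"
  unfolding safa_det_def
proof (intro allI impI, elim conjE)
  fix q a c1 o1 q1 c2 o2 q2
  assume t: "(q, a, c1, o1, q1) \<in> trans (compl_safa \<Sigma> M)" "(q, a, c2, o2, q2) \<in> trans (compl_safa \<Sigma> M)"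
  have added: "cond_idx c = tested_set M q a \<and> op = NoOp \<and> q' = sink M \<and> (\<forall>op q'. (q, a, c, op, q') \<notin> trans M)"
    if "(q, a, c, op, q') \<in> trans (compl_safa \<Sigma> M)" "(q, a, c, op, q') \<notin> trans M" for c op q'
    using that unfolding compl_safa_def by auto
  show "cond_idx c1 = cond_idx c2 \<and> (c1 = c2 \<longrightarrow> o1 = o2 \<and> q1 = q2)"
  proof (cases "(q, a, c1, o1, q1) \<in> trans M"; cases "(q, a, c2, o2, q2) \<in> trans M")
    assume "(q, a, c1, o1, q1) \<in> trans M" "(q, a, c2, o2, q2) \<in> trans M"
    then show ?thesis
      by (rule safa_detD[OF det])
  next
    assume "(q, a, c1, o1, q1) \<in> trans M" "(q, a, c2, o2, q2) \<notin> trans M"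
    with added[OF t(2)] show ?thesis
      using tested_set_eq[OF det] by auto
  next
    assume "(q, a, c1, o1, q1) \<notin> trans M" "(q, a, c2, o2, q2) \<in> trans M"
    with added[OF t(1)] show ?thesis
      using tested_set_eq[OF det] by auto
  next
    assume "(q, a, c1, o1, q1) \<notin> trans M" "(q, a, c2, o2, q2) \<notin> trans M"
    with added[OF t(1)] added[OF t(2)] show ?thesis
      by auto
  qed
qed

lemma compl_safa_total:
  assumes "q \<in> states (compl_safa \<Sigma> M)" "a \<in> \<Sigma>"
  shows "\<exists>c'. step (compl_safa \<Sigma> M) (q, S) (a, d) c'"
proof -
  define i where "i = tested_set M q a"
  define cd where "cd = (if d \<in> S i then P i else NP i)"
  have "cond_sat cd S d" "cond_idx cd = i"
    unfolding cd_def by auto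
  moreover have "\<exists>op q'. (q, a, cd, op, q') \<in> trans (compl_safa \<Sigma> M)"
  proof (cases "\<exists>op q'. (q, a, cd, op, q') \<in> trans M")
    case False
    with assms \<open>cond_idx cd = i\<close> have "(q, a, cd, NoOp, sink M) \<in> trans (compl_safa \<Sigma> M)"
      unfolding compl_safa_def i_def by simp
    then show ?thesis
      by blast
  qed (auto simp: compl_safa_def)
  ultimately show ?thesis
    unfolding step_Pair_iff by blast
qed

lemma runs_compl_safa_nonempty:
  assumes "safa_wf \<Sigma> M" "fst c \<in> states (compl_safa \<Sigma> M)" "w \<in> words \<Sigma>"
  shows "runs (compl_safa \<Sigma> M) c w \<noteq> {}"
  using assms(2,3)
proof (induction w arbitrary: c)
  case (Cons x w)
  obtain a d where x: "x = (a, d)"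
    by fastforce
  have a: "a \<in> \<Sigma>" and w: "w \<in> words \<Sigma>"
    using Cons.prems(2) by (auto simp: words_def x)
  obtain c1 where c1: "step (compl_safa \<Sigma> M) c x c1"
    using compl_safa_total[OF Cons.prems(1) a, of "snd c" d] by (auto simp: x)
  then have "fst c1 \<in> states (compl_safa \<Sigma> M)"
    using step_fst_states[OF compl_safa_wf[OF assms(1)]] by blast
  then obtain c' where "c' \<in> runs (compl_safa \<Sigma> M) c1 w"
    using Cons.IH w by blast
  with c1 have "c' \<in> runs (compl_safa \<Sigma> M) c (x # w)"
    unfolding runs_Cons_iff by blast
  then show ?case
    by blast
qed simp

lemma compl_safa_step_cases: "step (compl_safa \<Sigma> M) c x c' \<Longrightarrow> step M c x c' \<or> fst c' = sink M"
  unfolding step_def compl_safa_def by auto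

lemma runs_compl_safa_sink:
  assumes wf: "safa_wf \<Sigma> M"
  shows "c' \<in> runs (compl_safa \<Sigma> M) c w \<Longrightarrow> fst c = sink M \<or> runs M c w = {} \<Longrightarrow> fst c' = sink M"
proof (induction w arbitrary: c)
  case (Cons x w)
  then obtain c1 where c1: "step (compl_safa \<Sigma> M) c x c1" "c' \<in> runs (compl_safa \<Sigma> M) c1 w"
    by auto
  have "fst c1 = sink M \<or> runs M c1 w = {}"
  proof (cases "step M c x c1")
    case True
    have "fst c \<noteq> sink M"
      using step_fst_states[OF wf True] sink_notin_states[OF wf] by auto
    with Cons.prems(2) have "runs M c (x # w) = {}"
      by simp
    moreover have "runs M c1 w \<subseteq> runs M c (x # w)"
      using True unfolding subset_iff runs_Cons_iff by blast
    ultimately show ?thesis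
      by blast
  next
    case False
    then show ?thesis
      using compl_safa_step_cases[OF c1(1)] by blast
  qed
  with Cons.IH c1(2) show ?case .
qed simp

lemma accepts_compl_safa_iff:
  assumes wf: "safa_wf \<Sigma> M" and det: "safa_det M" and c: "fst c \<in> states M" and w: "w \<in> words \<Sigma>"
  shows "accepts (compl_safa \<Sigma> M) c w \<longleftrightarrow> \<not> accepts M c w"
proof -
  let ?C = "compl_safa \<Sigma> M"
  have det': "safa_det ?C"
    by (rule compl_safa_det[OF det])
  have finals: "finals ?C = insert (sink M) (states M) - finals M"
    by (simp add: compl_safa_def)
  have "fst c \<in> states ?C"
    using c by (simp add: compl_safa_def)
  then have "runs ?C c w \<noteq> {}"
    by (rule runs_compl_safa_nonempty[OF wf _ w])
  then obtain c' where c': "c' \<in> runs ?C c w"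
    by blast
  show ?thesis
  proof (cases "runs M c w = {}")
    case True
    then have "fst c' = sink M"
      using runs_compl_safa_sink[OF wf c'] by blast
    moreover have "finals M \<subseteq> states M"
      using wf by (simp add: safa_wf_def)
    ultimately have "accepts ?C c w"
      using accepts_det_iff[OF det' c'] finals sink_notin_states[OF wf] by auto
    moreover have "\<not> accepts M c w"
      using True by (simp add: accepts_def)
    ultimately show ?thesis
      by blast
  next
    case False
    then obtain c'' where c'': "c'' \<in> runs M c w"
      by blast
    have "trans M \<subseteq> trans ?C"
      by (auto simp: compl_safa_def)
    with c'' have "c' = c''"
      using runs_mono_trans runs_det[OF det' c'] by blast
    moreover have "fst c'' \<in> states M"
      using runs_fst_states[OF wf c c''] .
    ultimately show ?thesis
      using accepts_det_iff[OF det c''] accepts_det_iff[OF det' c'] finals by auto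
  qed
qed

lemma compl_safa_lang:
  assumes wf: "safa_wf \<Sigma> M" and det: "safa_det M"
  shows "lang \<Sigma> (compl_safa \<Sigma> M) = words \<Sigma> - lang \<Sigma> M"
proof -
  have "init (compl_safa \<Sigma> M) = init M"
    by (simp add: compl_safa_def)
  moreover have "fst (init M, \<lambda>_. {}) \<in> states M"
    using wf by (simp add: safa_wf_def)
  ultimately show ?thesis
    unfolding lang_eq using accepts_compl_safa_iff[OF wf det, of "(init M, \<lambda>_. {})"] by auto
qed

lemma dsafa_lang_compl: "dsafa_lang \<Sigma> L \<Longrightarrow> dsafa_lang \<Sigma> (words \<Sigma> - L)"
  unfolding dsafa_lang_def using compl_safa_lang compl_safa_wf compl_safa_det by metis

lemma dsafa_lang_subset_words: "dsafa_lang \<Sigma> L \<Longrightarrow> L \<subseteq> words \<Sigma>"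
  unfolding dsafa_lang_def lang_def by blast

lemma dsafa_lang_Un_if_Int_compl:
  assumes "dsafa_lang \<Sigma> L1" "dsafa_lang \<Sigma> L2" "dsafa_lang \<Sigma> ((words \<Sigma> - L1) \<inter> (words \<Sigma> - L2))"
  shows "dsafa_lang \<Sigma> (L1 \<union> L2)"
proof -
  have "words \<Sigma> - (words \<Sigma> - L1) \<inter> (words \<Sigma> - L2) = L1 \<union> L2"
    using dsafa_lang_subset_words[OF assms(1)] dsafa_lang_subset_words[OF assms(2)] by blast
  with dsafa_lang_compl[OF assms(3)] show ?thesis
    by simp
qed

subsection \<open>A fooling argument\<close>

lemma step_sets_cases:
  assumes "step M c x c'"
  obtains "snd c' = snd c" | j where "snd c' = (snd c)(j := insert (snd x) (snd c j))"
  using assms unfolding step_def by (metis apply_op.simps setop.exhaust)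

lemma step_sets_mono: "step M c x c' \<Longrightarrow> snd c i \<subseteq> snd c' i"
  by (erule step_sets_cases) auto

lemma step_other_value: "step M c (a, d) c' \<Longrightarrow> e \<noteq> d \<Longrightarrow> e \<in> snd c' i \<longleftrightarrow> e \<in> snd c i"
  by (erule step_sets_cases) auto

lemma step_new_value_one_set:
  "step M c (a, d) c' \<Longrightarrow> \<forall>k. d \<notin> snd c k \<Longrightarrow> d \<in> snd c' i \<Longrightarrow> d \<in> snd c' j \<Longrightarrow> i = j"
  by (erule step_sets_cases) (auto split: if_splits)

lemma runs_sets_subset: "c' \<in> runs M c w \<Longrightarrow> snd c' i \<subseteq> snd c i \<union> snd ` set w"
proof (induction w arbitrary: c)
  case (Cons x w)
  then obtain c1 where "step M c x c1" "c' \<in> runs M c1 w"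
    by auto
  then show ?case
    using Cons.IH step_other_value[of M c "fst x" "snd x" c1] by fastforce
qed simp

lemma accepted_values_eq_set:
  assumes det: "safa_det M" and fresh: "\<forall>i. f \<notin> snd c i"
    and rej: "\<not> accepts M c [(a, f)]" and acc: "accepts M c [(a, d)]"
  obtains i where "\<And>e. accepts M c [(a, e)] \<longleftrightarrow> e \<in> snd c i"
proof -
  obtain q S where c: "c = (q, S)"
    by fastforce
  from acc obtain cd op q' where t: "(q, a, cd, op, q') \<in> trans M" "cond_sat cd S d" "q' \<in> finals M"
    by (auto simp: c)
  \<comment> \<open>the fresh value f passes every test !p(h_i)\<close>
  have positive: "cd' = P (cond_idx cd')" if "(q, a, cd', op', q'') \<in> trans M" "q'' \<in> finals M"
    for cd' op' q''
  proof (cases cd')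
    case (NP i)
    with fresh that have "accepts M c [(a, f)]"
      by (simp add: c) (metis cond_sat.simps(2))
    with rej show ?thesis
      by contradiction
  qed simp
  have "accepts M c [(a, e)] \<longleftrightarrow> e \<in> S (cond_idx cd)" for e
  proof
    assume "accepts M c [(a, e)]"
    then obtain cd' op' q'' where "(q, a, cd', op', q'') \<in> trans M" "cond_sat cd' S e" "q'' \<in> finals M"
      by (auto simp: c)
    with positive safa_detD[OF det t(1)] show "e \<in> S (cond_idx cd)"
      by (metis cond_sat.simps(1))
  next
    assume "e \<in> S (cond_idx cd)"
    with positive[OF t(1,3)] t show "accepts M c [(a, e)]"
      by (auto simp: c) (metis cond_sat.simps(1))
  qed
  with that show thesis
    by (simp add: c)
qed

lemma det_no_fooling:
  assumes det: "safa_det M"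
    and fresh: "\<forall>i. x \<notin> snd c i" "\<forall>i. f \<notin> snd c i" and neq: "z \<noteq> x" "f \<noteq> x" "f \<noteq> z"
    and first: "accepts M c [(a, x), (a', x)]" "accepts M c [(a, x), (a', y)]"
      "\<not> accepts M c [(a, x), (a', f)]"
    and second: "accepts M c [(a, x), (b, z), (a'', x)]" "\<not> accepts M c [(a, x), (b, z), (a'', y)]"
      "\<not> accepts M c [(a, x), (b, z), (a'', f)]"
  shows False
proof -
  obtain c2 where c2: "step M c (a, x) c2"
    using first(1) unfolding accepts_def by auto
  obtain c3 where c3: "step M c2 (b, z) c3"
    using second(1) unfolding accepts_Cons_det[OF det c2] unfolding accepts_def by auto
  have acc: "accepts M c2 [(a', x)]" "accepts M c2 [(a', y)]" "\<not> accepts M c2 [(a', f)]"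
    "accepts M c3 [(a'', x)]" "\<not> accepts M c3 [(a'', y)]" "\<not> accepts M c3 [(a'', f)]"
    using first second unfolding accepts_Cons_det[OF det c2] accepts_Cons_det[OF det c3] by simp_all
  have "\<forall>i. f \<notin> snd c2 i" "\<forall>i. f \<notin> snd c3 i"
    using fresh(2) step_other_value[OF c2] step_other_value[OF c3] neq by auto
  then obtain j k where
    j: "\<And>e. accepts M c2 [(a', e)] \<longleftrightarrow> e \<in> snd c2 j" and
    k: "\<And>e. accepts M c3 [(a'', e)] \<longleftrightarrow> e \<in> snd c3 k"
    using accepted_values_eq_set[OF det _ acc(3,1)] accepted_values_eq_set[OF det _ acc(6,4)]
    by metis
  have "y \<in> snd c3 j" "y \<notin> snd c3 k"
    using acc(2,5) j k step_sets_mono[OF c3] by auto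
  moreover have "x \<in> snd c2 j" "x \<in> snd c2 k"
    using acc(1,4) j k step_other_value[OF c3] neq(1) by auto
  then have "j = k"
    using step_new_value_one_set[OF c2 fresh(1)] by blast
  ultimately show False
    by blast
qed

lemma not_dsafa_lang_if_fooling:
  fixes K :: "(nat \<times> 'd) list set"
  assumes u: "u \<in> words \<Sigma>" and letters: "{a, b, a', a''} \<subseteq> \<Sigma>"
    and fresh: "x \<notin> snd ` set u" "f \<notin> snd ` set u" and neq: "z \<noteq> x" "f \<noteq> x" "f \<noteq> z"
    and first: "u @ [(a, x), (a', x)] \<in> K" "u @ [(a, x), (a', y)] \<in> K" "u @ [(a, x), (a', f)] \<notin> K"
    and second: "u @ [(a, x), (b, z), (a'', x)] \<in> K" "u @ [(a, x), (b, z), (a'', y)] \<notin> K"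
      "u @ [(a, x), (b, z), (a'', f)] \<notin> K"
  shows "\<not> dsafa_lang \<Sigma> K"
proof
  assume "dsafa_lang \<Sigma> K"
  then obtain M where det: "safa_det M" and K: "K = lang \<Sigma> M"
    unfolding dsafa_lang_def by blast
  define c0 :: "'d config" where "c0 = (init M, \<lambda>_. {})"
  have "u @ v \<in> words \<Sigma>" if "set v \<subseteq> {a, b, a', a''} \<times> UNIV" for v
    using u letters that unfolding words_def by auto
  then have mem: "u @ v \<in> K \<longleftrightarrow> accepts M c0 (u @ v)" if "set v \<subseteq> {a, b, a', a''} \<times> UNIV" for v
    using that unfolding K lang_eq c0_def by blast
  obtain c where c: "c \<in> runs M c0 u"
    using first(1) unfolding mem[of "[(a, x), (a', x)]", simplified] accepts_append_iff by blast
  have "\<forall>i. x \<notin> snd c i" "\<forall>i. f \<notin> snd c i"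
    using runs_sets_subset[OF c] fresh unfolding c0_def by auto
  from det this neq show False
    by (rule det_no_fooling) (use first second in \<open>simp_all add: mem accepts_append_det[OF det c]\<close>)
qed

lemma append_in_conc: "u \<in> L1 \<Longrightarrow> v \<in> L2 \<Longrightarrow> u @ v \<in> conc L1 L2"
  unfolding conc_def by blast

lemma concat_in_kstar: "set us \<subseteq> L \<Longrightarrow> concat us \<in> kstar L"
  unfolding kstar_def by blast

lemma Cons_in_kstar_iff:
  assumes "[] \<notin> L"
  shows "x # w \<in> kstar L \<longleftrightarrow> (\<exists>u v. x # u \<in> L \<and> w = u @ v \<and> v \<in> kstar L)"
proof
  assume "x # w \<in> kstar L"
  then obtain us where us: "x # w = concat us" "set us \<subseteq> L"
    unfolding kstar_def by blast
  then obtain u0 us' where us_eq: "us = u0 # us'"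
    by (cases us) auto
  with us assms obtain u where "u0 = x # u" "w = u @ concat us'"
    by (cases u0) auto
  with us us_eq concat_in_kstar[of us' L] show "\<exists>u v. x # u \<in> L \<and> w = u @ v \<and> v \<in> kstar L"
    by auto
next
  assume "\<exists>u v. x # u \<in> L \<and> w = u @ v \<and> v \<in> kstar L"
  then obtain u vs where "x # u \<in> L" "w = u @ concat vs" "set vs \<subseteq> L"
    unfolding kstar_def by blast
  with concat_in_kstar[of "(x # u) # vs" L] show "x # w \<in> kstar L"
    by simp
qed

lemma rev_image_iff: "w \<in> rev ` A \<longleftrightarrow> rev w \<in> A"
  by force

subsection \<open>Witness languages\<close>

(* Unlike accepts_Cons, this form lets simp enumerate an explicitly given transition set. *)
lemma accepts_Cons_Bex: "accepts M (q, S) ((a, d) # w) \<longleftrightarrow>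
   (\<exists>(q0, a0, cd, op, q') \<in> trans M. q0 = q \<and> a0 = a \<and> cond_sat cd S d \<and> accepts M (q', apply_op op S d) w)"
  unfolding accepts_Cons by blast

lemma dsafa_langI:
  assumes "safa_wf \<Sigma> M" "safa_det M" "L \<subseteq> words \<Sigma>" "\<And>w. accepts M (init M, \<lambda>_. {}) w \<longleftrightarrow> w \<in> L"
  shows "dsafa_lang \<Sigma> L"
  unfolding dsafa_lang_def lang_eq using assms by blast

lemma safa_detI:
  assumes "\<forall>(q, a, c1, o1, q1) \<in> trans M. \<forall>(q', a', c2, o2, q2) \<in> trans M.
    q = q' \<and> a = a' \<longrightarrow> cond_idx c1 = cond_idx c2 \<and> (c1 = c2 \<longrightarrow> o1 = o2 \<and> q1 = q2)"
  shows "safa_det M"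
  using assms unfolding safa_det_def by fast

(* The witness automata below accept no word longer than 8. *)
lemma pair_list_cases9:
  obtains "w = []"
  | a1 d1 where "w = [(a1, d1)]"
  | a1 d1 a2 d2 where "w = [(a1, d1), (a2, d2)]"
  | a1 d1 a2 d2 a3 d3 where "w = [(a1, d1), (a2, d2), (a3, d3)]"
  | a1 d1 a2 d2 a3 d3 a4 d4 where "w = [(a1, d1), (a2, d2), (a3, d3), (a4, d4)]"
  | a1 d1 a2 d2 a3 d3 a4 d4 a5 d5 where "w = [(a1, d1), (a2, d2), (a3, d3), (a4, d4), (a5, d5)]"
  | a1 d1 a2 d2 a3 d3 a4 d4 a5 d5 a6 d6 where
      "w = [(a1, d1), (a2, d2), (a3, d3), (a4, d4), (a5, d5), (a6, d6)]"
  | a1 d1 a2 d2 a3 d3 a4 d4 a5 d5 a6 d6 a7 d7 where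
      "w = [(a1, d1), (a2, d2), (a3, d3), (a4, d4), (a5, d5), (a6, d6), (a7, d7)]"
  | a1 d1 a2 d2 a3 d3 a4 d4 a5 d5 a6 d6 a7 d7 a8 d8 where
      "w = [(a1, d1), (a2, d2), (a3, d3), (a4, d4), (a5, d5), (a6, d6), (a7, d7), (a8, d8)]"
  | a1 d1 a2 d2 a3 d3 a4 d4 a5 d5 a6 d6 a7 d7 a8 d8 a9 d9 r where
      "w = (a1, d1) # (a2, d2) # (a3, d3) # (a4, d4) # (a5, d5) # (a6, d6) # (a7, d7) # (a8, d8) # (a9, d9) # r"
  by (metis list.exhaust prod.exhaust)

definition repeat3 :: "(nat \<times> 'd) list set" where
  "repeat3 = {[(0, a), (0, b), (0, c)] | a b c. c = a \<or> c = b}"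

definition repeat3_safa :: safa where
  "repeat3_safa = \<lparr>states = {0, 1, 2, 3}, init = 0, finals = {3}, nsets = 1,
     trans = {(0, 0, NP 0, Ins 0, 1), (1, 0, P 0, Ins 0, 2), (1, 0, NP 0, Ins 0, 2), (2, 0, P 0, NoOp, 3)}\<rparr>"

lemma dsafa_lang_repeat3: "dsafa_lang {0} repeat3"
proof (rule dsafa_langI)
  show "safa_wf {0} repeat3_safa"
    by (simp add: safa_wf_def repeat3_safa_def)
  show "safa_det repeat3_safa"
    by (rule safa_detI) (simp add: repeat3_safa_def)
  show "repeat3 \<subseteq> words {0}"
    by (auto simp: repeat3_def words_def)
  show "accepts repeat3_safa (init repeat3_safa, \<lambda>_. {}) w \<longleftrightarrow> w \<in> repeat3" for w :: "(nat \<times> 'd) list"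
    by (cases w rule: pair_list_cases9;
        (simp add: accepts_Cons_Bex repeat3_safa_def repeat3_def del: accepts_Cons)?; blast?)
qed

definition repeat4 :: "(nat \<times> 'd) list set" where
  "repeat4 = {[(0, e), (0, a), (0, b), (0, c)] | e a b c. c = a \<or> c = b}"

definition repeat4_safa :: safa where
  "repeat4_safa = \<lparr>states = {0, 1, 2, 3, 4}, init = 0, finals = {4}, nsets = 1,
     trans = {(0, 0, NP 0, NoOp, 1), (1, 0, NP 0, Ins 0, 2), (2, 0, P 0, Ins 0, 3), (2, 0, NP 0, Ins 0, 3),
       (3, 0, P 0, NoOp, 4)}\<rparr>"

lemma dsafa_lang_repeat4: "dsafa_lang {0} repeat4"
proof (rule dsafa_langI)
  show "safa_wf {0} repeat4_safa"
    by (simp add: safa_wf_def repeat4_safa_def)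
  show "safa_det repeat4_safa"
    by (rule safa_detI) (simp add: repeat4_safa_def)
  show "repeat4 \<subseteq> words {0}"
    by (auto simp: repeat4_def words_def)
  show "accepts repeat4_safa (init repeat4_safa, \<lambda>_. {}) w \<longleftrightarrow> w \<in> repeat4" for w :: "(nat \<times> 'd) list"
    by (cases w rule: pair_list_cases9;
        (simp add: accepts_Cons_Bex repeat4_safa_def repeat4_def del: accepts_Cons)?; blast?)
qed

definition opt_letter :: "(nat \<times> 'd) list set" where
  "opt_letter = {[]} \<union> {[(0, a)] | a. True}"

definition opt_letter_safa :: safa where
  "opt_letter_safa = \<lparr>states = {0, 1}, init = 0, finals = {0, 1}, nsets = 1,
     trans = {(0, 0, NP 0, NoOp, 1)}\<rparr>"

lemma dsafa_lang_opt_letter: "dsafa_lang {0} opt_letter"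
proof (rule dsafa_langI)
  show "safa_wf {0} opt_letter_safa"
    by (simp add: safa_wf_def opt_letter_safa_def)
  show "safa_det opt_letter_safa"
    by (rule safa_detI) (simp add: opt_letter_safa_def)
  show "opt_letter \<subseteq> words {0}"
    by (auto simp: opt_letter_def words_def)
  show "accepts opt_letter_safa (init opt_letter_safa, \<lambda>_. {}) w \<longleftrightarrow> w \<in> opt_letter" for w :: "(nat \<times> 'd) list"
    by (cases w rule: pair_list_cases9;
        (simp add: accepts_Cons_Bex opt_letter_safa_def opt_letter_def del: accepts_Cons)?; blast?)
qed

lemma conc_opt_letter_repeat3: "conc opt_letter repeat3 = repeat3 \<union> repeat4"
proof (intro equalityI subsetI)
  fix w :: "(nat \<times> 'd) list"
  assume "w \<in> repeat3 \<union> repeat4"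
  then show "w \<in> conc opt_letter repeat3"
  proof
    assume "w \<in> repeat3"
    then show ?thesis
      using append_in_conc[of "[]" opt_letter w repeat3] by (simp add: opt_letter_def)
  next
    assume "w \<in> repeat4"
    then obtain e v where "w = [(0, e)] @ v" "v \<in> repeat3"
      unfolding repeat4_def repeat3_def by auto
    then show ?thesis
      using append_in_conc[of "[(0, e)]" opt_letter v repeat3] by (simp add: opt_letter_def)
  qed
qed (auto simp: conc_def opt_letter_def repeat3_def repeat4_def)

definition rev_repeat :: "(nat \<times> 'd) list set" where
  "rev_repeat = rev ` (repeat3 \<union> repeat4)"

definition rev_repeat_safa :: safa where
  "rev_repeat_safa = \<lparr>states = {0, 1, 2, 3, 4, 5}, init = 0, finals = {4, 5}, nsets = 1,
     trans = {(0, 0, NP 0, Ins 0, 1), (1, 0, P 0, NoOp, 2), (1, 0, NP 0, NoOp, 3), (2, 0, P 0, NoOp, 4),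
       (2, 0, NP 0, NoOp, 4), (3, 0, P 0, NoOp, 4), (4, 0, P 0, NoOp, 5), (4, 0, NP 0, NoOp, 5)}\<rparr>"

lemma dsafa_lang_rev_repeat: "dsafa_lang {0} rev_repeat"
proof (rule dsafa_langI)
  show "safa_wf {0} rev_repeat_safa"
    by (simp add: safa_wf_def rev_repeat_safa_def)
  show "safa_det rev_repeat_safa"
    by (rule safa_detI) (simp add: rev_repeat_safa_def)
  show "rev_repeat \<subseteq> words {0}"
    by (auto simp: rev_repeat_def repeat3_def repeat4_def rev_image_iff words_def)
  show "accepts rev_repeat_safa (init rev_repeat_safa, \<lambda>_. {}) w \<longleftrightarrow> w \<in> rev_repeat" for w :: "(nat \<times> 'd) list"
    by (cases w rule: pair_list_cases9;
        (simp add: accepts_Cons_Bex rev_repeat_safa_def rev_repeat_def repeat3_def repeat4_def rev_image_iff del: accepts_Cons)?; blast?)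
qed

lemma rev_rev_repeat: "rev ` rev_repeat = repeat3 \<union> repeat4"
  by (simp add: rev_repeat_def image_image)

definition star_witness :: "(nat \<times> 'd) list set" where
  "star_witness = {[(1, a)] | a. True} \<union> {[(0, a), (0, a)] | a. True}
     \<union> {[(1, a), (0, b), (0, a)] | a b. True} \<union> {[(0, a), (2, b), (0, a)] | a b. True}"

definition star_witness_safa :: safa where
  "star_witness_safa = \<lparr>states = {0, 1, 2, 3, 4, 5}, init = 0, finals = {1, 3}, nsets = 1,
     trans = {(0, 1, NP 0, Ins 0, 1), (1, 0, NP 0, NoOp, 2), (1, 0, P 0, NoOp, 2), (2, 0, P 0, NoOp, 3),
       (0, 0, NP 0, Ins 0, 4), (4, 0, P 0, NoOp, 3), (4, 2, P 0, NoOp, 5), (4, 2, NP 0, NoOp, 5),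
       (5, 0, P 0, NoOp, 3)}\<rparr>"

lemma dsafa_lang_star_witness: "dsafa_lang {0, 1, 2} star_witness"
proof (rule dsafa_langI)
  show "safa_wf {0, 1, 2} star_witness_safa"
    by (simp add: safa_wf_def star_witness_safa_def)
  show "safa_det star_witness_safa"
    by (rule safa_detI) (simp add: star_witness_safa_def)
  show "star_witness \<subseteq> words {0, 1, 2}"
    by (auto simp: star_witness_def words_def)
  show "accepts star_witness_safa (init star_witness_safa, \<lambda>_. {}) w \<longleftrightarrow> w \<in> star_witness" for w :: "(nat \<times> 'd) list"
    by (cases w rule: pair_list_cases9;
        (simp add: accepts_Cons_Bex star_witness_safa_def star_witness_def del: accepts_Cons)?; blast?)
qed

definition hom_witness :: "(nat \<times> 'd) list set" where
  "hom_witness = {[(1, a), (0, b), (0, a)] | a b. True} \<union> {[(0, a), (1, b), (0, b)] | a b. True}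
     \<union> {[(0, a), (1, b), (0, c), (0, b)] | a b c. True}"

definition hom_witness_safa :: safa where
  "hom_witness_safa = \<lparr>states = {0, 1, 2, 3, 4, 5, 6, 7, 8}, init = 0, finals = {3, 6, 8}, nsets = 1,
     trans = {(0, 1, NP 0, Ins 0, 1), (1, 0, P 0, NoOp, 2), (1, 0, NP 0, NoOp, 2), (2, 0, P 0, NoOp, 3),
       (0, 0, NP 0, NoOp, 4), (4, 1, NP 0, Ins 0, 5), (5, 0, P 0, NoOp, 6), (5, 0, NP 0, NoOp, 7),
       (6, 0, P 0, NoOp, 8), (7, 0, P 0, NoOp, 8)}\<rparr>"

lemma dsafa_lang_hom_witness: "dsafa_lang {0, 1} hom_witness"
proof (rule dsafa_langI)
  show "safa_wf {0, 1} hom_witness_safa"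
    by (simp add: safa_wf_def hom_witness_safa_def)
  show "safa_det hom_witness_safa"
    by (rule safa_detI) (simp add: hom_witness_safa_def)
  show "hom_witness \<subseteq> words {0, 1}"
    by (auto simp: hom_witness_def words_def)
  show "accepts hom_witness_safa (init hom_witness_safa, \<lambda>_. {}) w \<longleftrightarrow> w \<in> hom_witness" for w :: "(nat \<times> 'd) list"
    by (cases w rule: pair_list_cases9;
        (simp add: accepts_Cons_Bex hom_witness_safa_def hom_witness_def del: accepts_Cons)?; blast?)
qed

definition forget_letter :: "nat \<times> 'd \<Rightarrow> (nat \<times> 'd) list" where
  "forget_letter = (\<lambda>(a, d). [(0, d)])"

lemma is_hom_forget_letter: "is_hom {0, 1} forget_letter"
  by (simp add: is_hom_def forget_letter_def words_def)

definition invhom_witness :: "(nat \<times> 'd) list set" where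
  "invhom_witness = {[(0, a), (0, b), (0, c), (0, d), (0, e), (0, g)] | a b c d e g. e = a \<or> e = c}
     \<union> {[(0, a), (0, b), (0, c), (0, d), (0, e), (0, g), (0, i), (0, j)] | a b c d e g i j. j = d}"

definition invhom_witness_safa :: safa where
  "invhom_witness_safa = \<lparr>states = {0, 1, 2, 3, 4, 5, 6, 7, 8, 9, 10}, init = 0, finals = {7, 10}, nsets = 3,
     trans = {(0, 0, NP 2, Ins 0, 1), (1, 0, NP 2, NoOp, 2), (2, 0, NP 2, Ins 0, 3), (3, 0, NP 2, Ins 1, 4),
       (4, 0, P 0, NoOp, 5), (4, 0, NP 0, NoOp, 6), (5, 0, NP 2, NoOp, 7), (6, 0, NP 2, NoOp, 8),
       (7, 0, NP 2, NoOp, 9), (8, 0, NP 2, NoOp, 9), (9, 0, P 1, NoOp, 10)}\<rparr>"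

lemma dsafa_lang_invhom_witness: "dsafa_lang {0} invhom_witness"
proof (rule dsafa_langI)
  show "safa_wf {0} invhom_witness_safa"
    by (simp add: safa_wf_def invhom_witness_safa_def)
  show "safa_det invhom_witness_safa"
    by (rule safa_detI) (simp add: invhom_witness_safa_def)
  show "invhom_witness \<subseteq> words {0}"
    by (auto simp: invhom_witness_def words_def)
  show "accepts invhom_witness_safa (init invhom_witness_safa, \<lambda>_. {}) w \<longleftrightarrow> w \<in> invhom_witness" for w :: "(nat \<times> 'd) list"
    by (cases w rule: pair_list_cases9;
        (simp add: accepts_Cons_Bex invhom_witness_safa_def invhom_witness_def del: accepts_Cons)?; blast?)
qed

definition double_letter :: "nat \<times> 'd \<Rightarrow> (nat \<times> 'd) list" where
  "double_letter = (\<lambda>(a, d). [(0, d), (0, d)])"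

lemma is_hom_double_letter: "is_hom {0} double_letter"
  by (simp add: is_hom_def double_letter_def words_def)

subsection \<open>Non-closure\<close>

lemma obtain_distinct4:
  assumes "infinite (UNIV :: 'a set)"
  obtains x y z f :: 'a where "distinct [x, y, z, f]"
proof -
  fix x :: 'a
  obtain y where "y \<notin> {x}"
    using ex_new_if_finite[OF assms, of "{x}"] by auto
  moreover obtain z where "z \<notin> {x, y}"
    using ex_new_if_finite[OF assms, of "{x, y}"] by auto
  moreover obtain f where "f \<notin> {x, y, z}"
    using ex_new_if_finite[OF assms, of "{x, y, z}"] by auto
  ultimately show thesis
    using that by auto
qed

context
  fixes x y z f :: 'd
  assumes dist: "distinct [x, y, z, f]"
begin

lemma not_dsafa_lang_repeat: "\<not> dsafa_lang {0} (repeat3 \<union> repeat4 :: (nat \<times> 'd) list set)"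
  by (rule not_dsafa_lang_if_fooling[where u = "[(0, y)]" and a = 0 and b = 0 and a' = 0 and a'' = 0
        and x = x and y = y and z = z and f = f])
    (use dist in \<open>auto simp: repeat3_def repeat4_def words_def\<close>)

lemma not_dsafa_lang_Int_compl_repeat:
  "\<not> dsafa_lang {0} ((words {0} - repeat3) \<inter> (words {0} - repeat4) :: (nat \<times> 'd) list set)"
  using not_dsafa_lang_repeat dsafa_lang_Un_if_Int_compl dsafa_lang_repeat3 dsafa_lang_repeat4 by blast

lemma not_dsafa_lang_conc_opt_letter_repeat3: "\<not> dsafa_lang {0} (conc opt_letter (repeat3 :: (nat \<times> 'd) list set))"
  using not_dsafa_lang_repeat by (simp add: conc_opt_letter_repeat3)

lemma not_dsafa_lang_rev_rev_repeat: "\<not> dsafa_lang {0} (rev ` (rev_repeat :: (nat \<times> 'd) list set))"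
  using not_dsafa_lang_repeat by (simp add: rev_rev_repeat)

lemma not_dsafa_lang_kstar_star_witness: "\<not> dsafa_lang {0, 1, 2} (kstar (star_witness :: (nat \<times> 'd) list set))"
proof -
  let ?K = "kstar (star_witness :: (nat \<times> 'd) list set)"
  have "[] \<notin> (star_witness :: (nat \<times> 'd) list set)"
    by (auto simp: star_witness_def)
  note star = Cons_in_kstar_iff[OF this, unfolded star_witness_def, simplified]
  have "[(1, y), (0, x), (0, x)] \<in> ?K"
    using concat_in_kstar[of "[[(1, y)], [(0, x), (0, x)]]" star_witness] by (simp add: star_witness_def)
  moreover have "[(1, y), (0, x), (0, y)] \<in> ?K"
    using concat_in_kstar[of "[[(1, y), (0, x), (0, y)]]" star_witness] by (simp add: star_witness_def)
  moreover have "[(1, y), (0, x), (2, z), (0, x)] \<in> ?K"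
    using concat_in_kstar[of "[[(1, y)], [(0, x), (2, z), (0, x)]]" star_witness] by (simp add: star_witness_def)
  ultimately show ?thesis
    by (intro not_dsafa_lang_if_fooling[where u = "[(1, y)]" and a = 0 and b = 2 and a' = 0 and a'' = 0
          and x = x and y = y and z = z and f = f])
      (use dist in \<open>auto simp: star star_witness_def words_def\<close>)
qed

lemma not_dsafa_lang_hom_witness:
  "\<not> dsafa_lang {0, 1} (hom_ext forget_letter ` (hom_witness :: (nat \<times> 'd) list set))"
proof -
  let ?K = "hom_ext forget_letter ` (hom_witness :: (nat \<times> 'd) list set)"
  have "[(0, y), (0, x), (0, x)] \<in> ?K"
    by (rule image_eqI[of _ _ "[(0, y), (1, x), (0, x)]"]) (auto simp: hom_ext_def forget_letter_def hom_witness_def)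
  moreover have "[(0, y), (0, x), (0, y)] \<in> ?K"
    by (rule image_eqI[of _ _ "[(1, y), (0, x), (0, y)]"]) (auto simp: hom_ext_def forget_letter_def hom_witness_def)
  moreover have "[(0, y), (0, x), (0, z), (0, x)] \<in> ?K"
    by (rule image_eqI[of _ _ "[(0, y), (1, x), (0, z), (0, x)]"])
      (auto simp: hom_ext_def forget_letter_def hom_witness_def)
  ultimately show ?thesis
    by (intro not_dsafa_lang_if_fooling[where u = "[(0, y)]" and a = 0 and b = 0 and a' = 0 and a'' = 0
          and x = x and y = y and z = z and f = f])
      (use dist in \<open>auto simp: hom_witness_def hom_ext_def forget_letter_def words_def\<close>)
qed

lemma not_dsafa_lang_invhom_witness:
  "\<not> dsafa_lang {0} {w \<in> words {0}. hom_ext double_letter w \<in> (invhom_witness :: (nat \<times> 'd) list set)}"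
  by (rule not_dsafa_lang_if_fooling[where u = "[(0, y)]" and a = 0 and b = 0 and a' = 0 and a'' = 0
        and x = x and y = y and z = z and f = f])
    (use dist in \<open>auto simp: invhom_witness_def hom_ext_def double_letter_def words_def\<close>)

end

theorem theorem12:
  assumes "infinite (UNIV :: 'd::countable set)"
  shows "(\<forall>\<Sigma> (L :: (nat \<times> 'd) list set). finite \<Sigma> \<and> dsafa_lang \<Sigma> L \<longrightarrow> dsafa_lang \<Sigma> (words \<Sigma> - L))
   \<and> (\<exists>\<Sigma> (L1 :: (nat \<times> 'd) list set) L2. finite \<Sigma> \<and> dsafa_lang \<Sigma> L1 \<and> dsafa_lang \<Sigma> L2
        \<and> \<not> dsafa_lang \<Sigma> (L1 \<union> L2))
   \<and> (\<exists>\<Sigma> (L1 :: (nat \<times> 'd) list set) L2. finite \<Sigma> \<and> dsafa_lang \<Sigma> L1 \<and> dsafa_lang \<Sigma> L2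
        \<and> \<not> dsafa_lang \<Sigma> (L1 \<inter> L2))
   \<and> (\<exists>\<Sigma> (L1 :: (nat \<times> 'd) list set) L2. finite \<Sigma> \<and> dsafa_lang \<Sigma> L1 \<and> dsafa_lang \<Sigma> L2
        \<and> \<not> dsafa_lang \<Sigma> (conc L1 L2))
   \<and> (\<exists>\<Sigma> (L :: (nat \<times> 'd) list set). finite \<Sigma> \<and> dsafa_lang \<Sigma> L \<and> \<not> dsafa_lang \<Sigma> (kstar L))
   \<and> (\<exists>\<Sigma> (L :: (nat \<times> 'd) list set). finite \<Sigma> \<and> dsafa_lang \<Sigma> L \<and> \<not> dsafa_lang \<Sigma> (rev ` L))
   \<and> (\<exists>\<Sigma> (L :: (nat \<times> 'd) list set) h. finite \<Sigma> \<and> dsafa_lang \<Sigma> L \<and> is_hom \<Sigma> h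
        \<and> \<not> dsafa_lang \<Sigma> (hom_ext h ` L))
   \<and> (\<exists>\<Sigma> (L :: (nat \<times> 'd) list set) h. finite \<Sigma> \<and> dsafa_lang \<Sigma> L \<and> is_hom \<Sigma> h
        \<and> \<not> dsafa_lang \<Sigma> {w \<in> words \<Sigma>. hom_ext h w \<in> L})"
proof -
  obtain x y z f :: 'd where dist: "distinct [x, y, z, f]"
    using obtain_distinct4[OF assms] .
  have "finite {0 :: nat}" "finite {0, 1 :: nat}" "finite {0, 1, 2 :: nat}"
    by simp_all
  then show ?thesis
    using dsafa_lang_compl dsafa_lang_repeat3 dsafa_lang_repeat4 dsafa_lang_opt_letter
      dsafa_lang_rev_repeat dsafa_lang_star_witness dsafa_lang_hom_witness dsafa_lang_invhom_witness
      dsafa_lang_compl[OF dsafa_lang_repeat3] dsafa_lang_compl[OF dsafa_lang_repeat4]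
      is_hom_forget_letter is_hom_double_letter
      not_dsafa_lang_repeat[OF dist] not_dsafa_lang_Int_compl_repeat[OF dist]
      not_dsafa_lang_conc_opt_letter_repeat3[OF dist] not_dsafa_lang_kstar_star_witness[OF dist]
      not_dsafa_lang_rev_rev_repeat[OF dist] not_dsafa_lang_hom_witness[OF dist]
      not_dsafa_lang_invhom_witness[OF dist]
    by blast
qed

end
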